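(* Let $c$ be a prefix equivariant statistic, $N\ge1$ and $\theta>0$. Then there exists $k\in\{0,1,\dots,N-1\}$ such that, in the weighted game of best choice defined by $c$ and $\theta$, the positional strategy with parameter $k$ maximizes the probability of winning among all strategies.
   Context: Permutations of $\{1,\dots,m\}$ are written in one-line notation; $\mathfrak S_m$ is the set of all of them. An entry $\pi_j$ is a left-to-right maximum of $\pi$ if $\pi_j>\pi_i$ for all $i<j$. A statistic is a function $c:\bigcup_{m=1}^N\mathfrak S_m\to\mathbb Z_{\ge0}$. The weighted game of best choice is played as follows. A permutation $\pi\in\mathfrak S_N$ is chosen with probability $\theta^{c(\pi)}/\sum_{\sigma\in\mathfrak S_N}\theta^{c(\sigma)}$. For $i=1,\dots,N$, the player sees $\pi^{(i)}$, the unique element of $\mathfrak S_i$ with the same relative order as $\pi_1,\dots,\pi_i$. Based only on this, the player accepts candidate $i$ (ending the game) or rejects it; candidate $N$ is accepted if all earlier ones were rejected. The player wins iff the accepted candidate $i$ has $\pi_i=N$. A strategy is any such decision rule. The positional strategy with parameter $k$ rejects candidates $1,\dots,k$ and accepts the first candidate $i>k$ such that $\pi_i$ is a left-to-right maximum of $\pi$. Let $e_k=12\cdots k$. For $q\in\mathfrak S_k$ and $\pi\in\mathfrak S_m$ ($k\le m\le N$) with $\pi_1<\cdots<\pi_k$, $\sigma_q\cdot\pi\in\mathfrak S_m$ is given by $(\sigma_q\cdot\pi)_i=\pi_{q_i}$ for $i\le k$ and $(\sigma_q\cdot\pi)_i=\pi_i$ for $i>k$. The statistic $c$ is prefix equivariant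 if $c(\pi)-c(\sigma_q\cdot\pi)=c(e_k)-c(q)$ for all such $k,q,\pi$. Examples include the number of left-to-right maxima and the number of inversions. *)

theory Defs
  imports Complex_Main "HOL-Combinatorics.Multiset_Permutations"
begin

definition Sym :: "nat \<Rightarrow> nat list set" where
  "Sym m = permutations_of_set {1..m}"

definition idperm :: "nat \<Rightarrow> nat list" where
  "idperm k = [1..<Suc k]"

text \<open>Standardization: the unique permutation with the same relative order
  as a list of distinct numbers (so std (take i pi) is pi^(i)).\<close>
definition std :: "nat list \<Rightarrow> nat list" where
  "std xs = map (\<lambda>x. card {y \<in> set xs. y \<le> x}) xs"

text \<open>The action sigma_q . pi: permute the first k = length q entries by q.\<close>
definition act :: "nat list \<Rightarrow> nat list \<Rightarrow> nat list" where
  "act q p = map (\<lambda>i. p ! (q ! i - 1)) [0..<length q] @ drop (length q) p"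

definition prefix_equivariant :: "nat \<Rightarrow> (nat list \<Rightarrow> nat) \<Rightarrow> bool" where
  "prefix_equivariant N c \<longleftrightarrow>
     (\<forall>k m q p. 1 \<le> k \<and> k \<le> m \<and> m \<le> N \<and> q \<in> Sym k \<and> p \<in> Sym m \<and>
        sorted_wrt (<) (take k p) \<longrightarrow>
        int (c p) - int (c (act q p)) = int (c (idperm k)) - int (c q))"

text \<open>A (deterministic) strategy is a decision rule on the observed pattern
  pi^(i): True = accept candidate i.  The candidate accepted for pi in S_N is
  the first i < N whose pattern is accepted, and N otherwise.\<close>
type_synonym strategy = "nat list \<Rightarrow> bool"

definition stop_time :: "nat \<Rightarrow> strategy \<Rightarrow> nat list \<Rightarrow> nat" where
  "stop_time N s p = Min ({i \<in> {1..<N}. s (std (take i p))} \<union> {N})"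

definition wins :: "nat \<Rightarrow> strategy \<Rightarrow> nat list \<Rightarrow> bool" where
  "wins N s p \<longleftrightarrow> p ! (stop_time N s p - 1) = N"

definition win_prob :: "(nat list \<Rightarrow> nat) \<Rightarrow> real \<Rightarrow> nat \<Rightarrow> strategy \<Rightarrow> real" where
  "win_prob c \<theta> N s =
     (\<Sum>p\<in>{p \<in> Sym N. wins N s p}. \<theta> ^ c p) / (\<Sum>p\<in>Sym N. \<theta> ^ c p)"

definition last_is_lr_max :: "nat list \<Rightarrow> bool" where
  "last_is_lr_max xs \<longleftrightarrow> xs \<noteq> [] \<and> (\<forall>j < length xs - 1. xs ! j < last xs)"

text \<open>Positional strategy with parameter k: reject candidates 1..k, then accept
  the first candidate i > k that is a left-to-right maximum.\<close>
definition positional :: "nat \<Rightarrow> strategy" where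
  "positional k \<sigma> \<longleftrightarrow> k < length \<sigma> \<and> last_is_lr_max \<sigma>"

end

theory Submission
  imports Defs
begin

text \<open>
  Prefix equivariance makes the weight \<open>\<theta>\<^bsup>c\<^esup>\<close> factorise along the bijection
  \<open>(p, q) \<mapsto> \<sigma>\<^sub>q \<cdot> p\<close> from the permutations with increasing first \<open>k\<close> entries, times
  \<open>\<SS>\<^sub>k\<close>, onto \<open>\<SS>\<^sub>N\<close>.  Hence the relative order of the first \<open>k\<close> entries is
  independent of the set of values they occupy and of the remaining entries.  So the event
  ``candidate \<open>i\<close> is a left-to-right maximum'' is independent of ``the player reaches \<open>i\<close>'',
  and a player stopping at a left-to-right maximum \<open>i\<close> wins with conditional probability
  \<open>S\<^sub>i = P(N \<in> {\<pi>\<^sub>1, \<dots>, \<pi>\<^sub>i})\<close>.  The winning probability of every strategy is therefore bounded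
  by the value of a one-dimensional optimal stopping recursion, and since \<open>S\<^sub>i\<close> increases
  with \<open>i\<close>, that value is attained by a threshold rule, i.e. by a positional strategy.
\<close>

section \<open>Standardization\<close>

definition rank_in :: "nat list \<Rightarrow> nat \<Rightarrow> nat" where
  "rank_in xs x = card {y \<in> set xs. y \<le> x}"

lemma std_eq_map_rank_in: "std xs = map (rank_in xs) xs"
  by (simp add: std_def rank_in_def)

lemma length_std [simp]: "length (std xs) = length xs"
  by (simp add: std_def)

lemma strict_mono_on_rank_in: "strict_mono_on (set xs) (rank_in xs)"
proof (rule strict_mono_onI)
  fix a b assume "a \<in> set xs" "b \<in> set xs" "a < b"
  then have "{y \<in> set xs. y \<le> a} \<subseteq> {y \<in> set xs. y \<le> b}"
    and "b \<in> {y \<in> set xs. y \<le> b} - {y \<in> set xs. y \<le> a}" by auto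
  then have "{y \<in> set xs. y \<le> a} \<subset> {y \<in> set xs. y \<le> b}" by blast
  then show "rank_in xs a < rank_in xs b" unfolding rank_in_def by (intro psubset_card_mono) auto
qed

lemma rank_in_bounds:
  assumes "distinct xs" and "x \<in> set xs"
  shows "rank_in xs x \<in> {1..length xs}"
proof -
  have "0 < rank_in xs x" unfolding rank_in_def using assms(2) by (subst card_gt_0_iff) auto
  moreover have "rank_in xs x \<le> card (set xs)" unfolding rank_in_def by (intro card_mono) auto
  ultimately show ?thesis using assms(1) by (simp add: distinct_card)
qed

lemma rank_in_sorted:
  assumes sorted: "sorted_wrt (<) zs" and t: "t < length zs"
  shows "rank_in zs (zs ! t) = Suc t"
proof -
  have "{z \<in> set zs. z \<le> zs ! t} = nth zs ` {0..t}"
  proof (intro equalityI subsetI)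
    fix z assume "z \<in> {z \<in> set zs. z \<le> zs ! t}"
    then obtain a where "a < length zs" "z = zs ! a" "zs ! a \<le> zs ! t"
      by (auto simp: in_set_conv_nth)
    moreover have "a \<le> t"
      using calculation sorted_wrt_nth_less[OF sorted, of t a] by (cases "t < a") auto
    ultimately show "z \<in> nth zs ` {0..t}" by auto
  next
    fix z assume "z \<in> nth zs ` {0..t}"
    then obtain a where "a \<le> t" "z = zs ! a" by auto
    moreover have "zs ! a \<le> zs ! t"
      using calculation sorted_wrt_nth_less[OF sorted, of a t] t by (cases "a = t") auto
    ultimately show "z \<in> {z \<in> set zs. z \<le> zs ! t}" using t by auto
  qed
  moreover have "inj_on (nth zs) {0..t}"
    using sorted t by (intro inj_on_nth) (auto simp: strict_sorted_iff)
  ultimately show ?thesis unfolding rank_in_def by (simp add: card_image)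
qed

lemma mem_Sym_iff: "q \<in> Sym k \<longleftrightarrow> distinct q \<and> set q = {1..k}"
  by (auto simp: Sym_def permutations_of_set_def)

lemma finite_Sym [simp]: "finite (Sym N)"
  by (simp add: Sym_def)

lemma length_Sym: "q \<in> Sym k \<Longrightarrow> length q = k"
  using distinct_card[of q] by (simp add: mem_Sym_iff)

lemma idperm_in_Sym: "idperm N \<in> Sym N"
  by (auto simp: mem_Sym_iff idperm_def)

lemma std_in_Sym:
  assumes "distinct xs"
  shows "std xs \<in> Sym (length xs)"
proof -
  have inj: "inj_on (rank_in xs) (set xs)"
    using strict_mono_on_rank_in strict_mono_on_imp_inj_on by blast
  have "rank_in xs ` set xs \<subseteq> {1..length xs}"
    using rank_in_bounds[OF assms] by auto
  moreover have "card (rank_in xs ` set xs) = length xs"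
    using inj assms by (simp add: card_image distinct_card)
  ultimately have "rank_in xs ` set xs = {1..length xs}"
    by (intro card_subset_eq) auto
  moreover have "distinct (map (rank_in xs) xs)"
    using inj assms by (simp add: distinct_map)
  ultimately show ?thesis unfolding mem_Sym_iff std_eq_map_rank_in by simp
qed

lemma std_Sym: "q \<in> Sym k \<Longrightarrow> std q = q"
proof -
  assume q: "q \<in> Sym k"
  have "card {y \<in> set q. y \<le> x} = x" if "x \<in> set q" for x
  proof -
    have "{y \<in> set q. y \<le> x} = {1..x}" using q that by (auto simp: mem_Sym_iff)
    then show ?thesis by simp
  qed
  then show ?thesis unfolding std_def by (simp add: map_idI)
qed

lemma std_nth_less_iff:
  "i < length xs \<Longrightarrow> j < length xs \<Longrightarrow> std xs ! i < std xs ! j \<longleftrightarrow> xs ! i < xs ! j"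
  unfolding std_eq_map_rank_in using strict_mono_on_rank_in[of xs]
  by (simp add: strict_mono_on_less)

lemma std_map_strict_mono:
  assumes mono: "strict_mono_on (set ys) f"
  shows "std (map f ys) = std ys"
proof -
  have "card {y \<in> f ` set ys. y \<le> f z} = card {y \<in> set ys. y \<le> z}" if "z \<in> set ys" for z
  proof -
    have "{y \<in> f ` set ys. y \<le> f z} = f ` {y \<in> set ys. y \<le> z}"
      using that strict_mono_on_less_eq[OF mono] by auto
    moreover have "inj_on f {y \<in> set ys. y \<le> z}"
      using strict_mono_on_imp_inj_on[OF mono] by (rule inj_on_subset) auto
    ultimately show ?thesis by (simp add: card_image)
  qed
  then show ?thesis unfolding std_def by simp
qed

lemma std_take_std: "std (take j (std xs)) = std (take j xs)"
proof -
  have "take j (std xs) = map (rank_in xs) (take j xs)"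
    by (simp add: std_eq_map_rank_in take_map)
  moreover have "strict_mono_on (set (take j xs)) (rank_in xs)"
    using strict_mono_on_rank_in[of xs] set_take_subset[of j xs]
    by (auto intro!: strict_mono_onI dest: strict_mono_onD)
  ultimately show ?thesis by (simp add: std_map_strict_mono)
qed

section \<open>The action on prefixes\<close>

lemma act_eq: "act q p = map (\<lambda>j. p ! (j - 1)) q @ drop (length q) p"
proof -
  have "map (\<lambda>i. p ! (q ! i - 1)) [0..<length q] = map (\<lambda>j. p ! (j - 1)) q"
    by (rule nth_equalityI) auto
  then show ?thesis by (simp add: act_def)
qed

lemma take_act: "take (length q) (act q p) = map (\<lambda>j. p ! (j - 1)) q"
  by (simp add: act_eq)

lemma drop_act: "drop (length q) (act q p) = drop (length q) p"
  by (simp add: act_eq)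

lemma image_shifted_nth:
  assumes "k \<le> length p"
  shows "(\<lambda>j. p ! (j - 1)) ` {1..k} = set (take k p)"
proof -
  have "(\<lambda>j. j - 1) ` {1..k} = {0..<k}"
    by (auto simp: image_iff intro!: bexI[of _ "Suc _"])
  then have "(\<lambda>j. p ! (j - 1)) ` {1..k} = nth p ` {0..<k}"
    by (metis image_image)
  then show ?thesis using nth_image[OF assms] by simp
qed

lemma inj_on_shifted_nth:
  assumes "distinct p" and "k \<le> length p"
  shows "inj_on (\<lambda>j. p ! (j - 1)) {1..k}"
  using assms by (auto intro!: inj_onI simp: nth_eq_iff_index_eq)

lemma
  assumes q: "q \<in> Sym k" and p: "p \<in> Sym m" and "k \<le> m"
  shows act_in_Sym: "act q p \<in> Sym m"
    and set_take_act: "set (take k (act q p)) = set (take k p)"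
proof -
  have lq: "length q = k" using length_Sym[OF q] .
  have "k \<le> length p" using length_Sym[OF p] \<open>k \<le> m\<close> by simp
  have dp: "distinct p" and sp: "set p = {1..m}" using p by (auto simp: mem_Sym_iff)
  have dq: "distinct q" and sq: "set q = {1..k}" using q by (auto simp: mem_Sym_iff)
  have act: "act q p = map (\<lambda>j. p ! (j - 1)) q @ drop k p" using act_eq lq by simp
  have st: "set (map (\<lambda>j. p ! (j - 1)) q) = set (take k p)"
    using image_shifted_nth[OF \<open>k \<le> length p\<close>] sq by simp
  then show "set (take k (act q p)) = set (take k p)" using take_act[of q p] lq by simp
  have "distinct (map (\<lambda>j. p ! (j - 1)) q)"
    using dq inj_on_shifted_nth[OF dp \<open>k \<le> length p\<close>] sq by (simp add: distinct_map)
  moreover have "set (take k p) \<inter> set (drop k p) = {}"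
    using set_take_disj_set_drop_if_distinct[OF dp] by simp
  ultimately have "distinct (act q p)" unfolding act using st dp by auto
  moreover have "set (act q p) = {1..m}" unfolding act using st sp
    by (metis append_take_drop_id set_append)
  ultimately show "act q p \<in> Sym m" by (simp add: mem_Sym_iff)
qed

lemma std_take_act:
  assumes q: "q \<in> Sym k" and p: "p \<in> Sym m" and "k \<le> m"
    and sorted: "sorted_wrt (<) (take k p)"
  shows "std (take k (act q p)) = q"
proof -
  have lq: "length q = k" using length_Sym[OF q] .
  have sq: "set q = {1..k}" using q by (auto simp: mem_Sym_iff)
  have "strict_mono_on (set q) (\<lambda>j. p ! (j - 1))"
  proof (rule strict_mono_onI)
    fix a b assume "a \<in> set q" "b \<in> set q" "a < b"
    then have ab: "a - 1 < b - 1" "b - 1 < length (take k p)"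
      using sq length_Sym[OF p] \<open>k \<le> m\<close> by auto
    show "p ! (a - 1) < p ! (b - 1)" using sorted_wrt_nth_less[OF sorted ab] ab by simp
  qed
  then show ?thesis using take_act[of q p] lq std_map_strict_mono std_Sym[OF q] by simp
qed

definition Sym_sorted_prefix :: "nat \<Rightarrow> nat \<Rightarrow> nat list set" where
  "Sym_sorted_prefix N k = {p \<in> Sym N. sorted_wrt (<) (take k p)}"

text \<open>Sorting the first \<open>k\<close> entries and recording their pattern inverts the action.\<close>

lemma act_std_take_sort:
  assumes x: "x \<in> Sym N" and "k \<le> N"
  defines "p \<equiv> sort (take k x) @ drop k x"
  shows "p \<in> Sym_sorted_prefix N k" and "act (std (take k x)) p = x"
proof -
  define ys where "ys = take k x"
  define zs where "zs = sort ys"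
  have dx: "distinct x" and sx: "set x = {1..N}" using x by (auto simp: mem_Sym_iff)
  have ly: "length ys = k" using length_Sym[OF x] \<open>k \<le> N\<close> by (simp add: ys_def)
  have dy: "distinct ys" using dx by (simp add: ys_def)
  have zset: "set zs = set ys" and lz: "length zs = k" using ly by (simp_all add: zs_def)
  have zsorted: "sorted_wrt (<) zs" using dy by (simp add: zs_def strict_sorted_iff)
  have p: "p = zs @ drop k x" by (simp add: p_def zs_def ys_def)
  have "set ys \<inter> set (drop k x) = {}"
    using set_take_disj_set_drop_if_distinct[OF dx] by (simp add: ys_def)
  then have "distinct p" using zsorted zset dx by (auto simp: p strict_sorted_iff)
  moreover have "set p = {1..N}" using zset sx by (metis append_take_drop_id p set_append ys_def)
  ultimately show "p \<in> Sym_sorted_prefix N k"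
    using zsorted lz by (simp add: Sym_sorted_prefix_def mem_Sym_iff p)
  have "p ! (rank_in ys y - 1) = y" if "y \<in> set ys" for y
  proof -
    obtain t where t: "t < length zs" "y = zs ! t"
      using \<open>y \<in> set ys\<close> zset by (metis in_set_conv_nth)
    have "rank_in ys y = Suc t"
      using rank_in_sorted[OF zsorted t(1)] t zset by (simp add: rank_in_def)
    then show ?thesis using t lz by (simp add: p nth_append)
  qed
  then have "map (\<lambda>j. p ! (j - 1)) (std ys) = ys"
    by (simp add: std_eq_map_rank_in map_idI)
  then show "act (std (take k x)) p = x"
    using ly lz by (simp add: act_eq p ys_def[symmetric] zs_def[symmetric]) (simp add: ys_def)
qed

lemma bij_betw_act:
  assumes "k \<le> N"
  shows "bij_betw (\<lambda>(p, q). act q p) (Sym_sorted_prefix N k \<times> Sym k) (Sym N)"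
proof (rule bij_betw_imageI)
  show "inj_on (\<lambda>(p, q). act q p) (Sym_sorted_prefix N k \<times> Sym k)"
  proof (rule inj_onI, clarify)
    fix p q p' q'
    assume "p \<in> Sym_sorted_prefix N k" "p' \<in> Sym_sorted_prefix N k"
      and q: "q \<in> Sym k" and q': "q' \<in> Sym k" and eq: "act q p = act q' p'"
    then have p: "p \<in> Sym N" "sorted_wrt (<) (take k p)"
      and p': "p' \<in> Sym N" "sorted_wrt (<) (take k p')"
      by (auto simp: Sym_sorted_prefix_def)
    show "p = p' \<and> q = q'"
    proof
      show "q = q'" using std_take_act[OF q p(1) assms p(2)] std_take_act[OF q' p'(1) assms p'(2)] eq
        by simp
      have "set (take k p) = set (take k p')"
        using set_take_act[OF q p(1) assms] set_take_act[OF q' p'(1) assms] eq by simp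
      then have "take k p = take k p'"
        using p(2) p'(2) by (intro sorted_distinct_set_unique) (auto simp: strict_sorted_iff)
      moreover have "drop k p = drop k p'"
        using drop_act[of q p] drop_act[of q' p'] length_Sym[OF q] length_Sym[OF q'] eq by simp
      ultimately show "p = p'" by (metis append_take_drop_id)
    qed
  qed
  show "(\<lambda>(p, q). act q p) ` (Sym_sorted_prefix N k \<times> Sym k) = Sym N"
  proof (intro equalityI subsetI)
    fix x assume "x \<in> (\<lambda>(p, q). act q p) ` (Sym_sorted_prefix N k \<times> Sym k)"
    then show "x \<in> Sym N" using act_in_Sym assms by (auto simp: Sym_sorted_prefix_def)
  next
    fix x assume x: "x \<in> Sym N"
    have "distinct (take k x)" and "length (take k x) = k"
      using x assms by (simp_all add: mem_Sym_iff length_Sym[OF x])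
    then have "std (take k x) \<in> Sym k" using std_in_Sym by metis
    with act_std_take_sort[OF x assms] show "x \<in> (\<lambda>(p, q). act q p) ` (Sym_sorted_prefix N k \<times> Sym k)"
      by force
  qed
qed

section \<open>Left-to-right maxima and stopping times\<close>

definition lr_max_at :: "nat \<Rightarrow> nat list \<Rightarrow> bool" where
  "lr_max_at i p \<longleftrightarrow> (\<forall>j < i - 1. p ! j < p ! (i - 1))"

lemma lr_max_at_std_take:
  assumes "i \<le> length p"
  shows "lr_max_at i (std (take i p)) \<longleftrightarrow> lr_max_at i p"
  using assms std_nth_less_iff[of _ "take i p" "i - 1"] by (simp add: lr_max_at_def)

lemma lr_max_at_iff_prefix:
  assumes "1 \<le> i" and "i \<le> length p"
  shows "lr_max_at i p \<longleftrightarrow> (\<forall>y\<in>set (take (i - 1) p). y < drop (i - 1) p ! 0)"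
proof -
  have "drop (i - 1) p ! 0 = p ! (i - 1)" using assms by simp
  moreover have "set (take (i - 1) p) = nth p ` {0..<i - 1}" using nth_image[of "i - 1" p] assms by simp
  ultimately show ?thesis unfolding lr_max_at_def by auto
qed

lemma last_is_lr_max_iff: "length \<sigma> = i \<Longrightarrow> 1 \<le> i \<Longrightarrow> last_is_lr_max \<sigma> \<longleftrightarrow> lr_max_at i \<sigma>"
  by (cases \<sigma> rule: rev_cases) (auto simp: last_is_lr_max_def lr_max_at_def nth_append)

lemma nth_eq_max_iff:
  assumes p: "p \<in> Sym N" and i: "1 \<le> i" "i \<le> N"
  shows "p ! (i - 1) = N \<longleftrightarrow> lr_max_at i p \<and> N \<in> set (take i p)"
proof -
  have lp: "length p = N" using length_Sym[OF p] .
  have dp: "distinct p" and sp: "set p = {1..N}" using p by (auto simp: mem_Sym_iff)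
  have le: "p ! j \<le> N" if "j < N" for j using sp lp that by (metis atLeastAtMost_iff nth_mem)
  show ?thesis
  proof
    assume eq: "p ! (i - 1) = N"
    have "p ! j < p ! (i - 1)" if "j < i - 1" for j
    proof -
      have "p ! j \<noteq> p ! (i - 1)" using that dp i lp by (simp add: nth_eq_iff_index_eq)
      moreover have "j < N" using that i by simp
      ultimately show ?thesis using le[of j] eq by simp
    qed
    moreover have "take i p ! (i - 1) \<in> set (take i p)" using i lp by (intro nth_mem) simp
    then have "N \<in> set (take i p)" using eq i by simp
    ultimately show "lr_max_at i p \<and> N \<in> set (take i p)" by (simp add: lr_max_at_def)
  next
    assume "lr_max_at i p \<and> N \<in> set (take i p)"
    then obtain j where lr: "lr_max_at i p" and j: "j < i" "p ! j = N"
      using i lp by (auto simp: in_set_conv_nth)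
    show "p ! (i - 1) = N"
    proof (cases "j = i - 1")
      case False
      then have "N < p ! (i - 1)" using lr j unfolding lr_max_at_def by auto
      moreover have "p ! (i - 1) \<le> N" using le i by simp
      ultimately show ?thesis by simp
    qed (use j in simp)
  qed
qed

definition rejects_before :: "strategy \<Rightarrow> nat \<Rightarrow> nat list \<Rightarrow> bool" where
  "rejects_before s i \<sigma> \<longleftrightarrow> (\<forall>j\<in>{1..<i}. \<not> s (std (take j \<sigma>)))"

lemma stop_time_mem: "stop_time N s p \<in> {i \<in> {1..<N}. s (std (take i p))} \<union> {N}"
  unfolding stop_time_def by (rule Min_in) auto

lemma stop_time_bounds: "1 \<le> N \<Longrightarrow> stop_time N s p \<in> {1..N}"
  using stop_time_mem[of N s p] by auto

lemma stop_time_le: "j \<in> {1..<N} \<Longrightarrow> s (std (take j p)) \<Longrightarrow> stop_time N s p \<le> j"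
  unfolding stop_time_def by (rule Min_le) auto

lemma accepts_at_stop_time: "stop_time N s p < N \<Longrightarrow> s (std (take (stop_time N s p) p))"
  using stop_time_mem[of N s p] by auto

lemma le_stop_time_iff: "i \<le> N \<Longrightarrow> i \<le> stop_time N s p \<longleftrightarrow> rejects_before s i p"
  unfolding stop_time_def rejects_before_def by (subst Min_ge_iff) force+

lemma le_stop_time_iff_std_take:
  assumes p: "p \<in> Sym N" and "i \<le> N" "i - 1 \<le> k"
  shows "i \<le> stop_time N s p \<longleftrightarrow> rejects_before s i (std (take k p))"
proof -
  have "std (take j (std (take k p))) = std (take j p)" if "j \<in> {1..<i}" for j
  proof -
    have "j \<le> k" using that \<open>i - 1 \<le> k\<close> by auto
    then show ?thesis using std_take_std[of j "take k p"] by (simp add: min_def)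
  qed
  then show ?thesis
    unfolding le_stop_time_iff[OF \<open>i \<le> N\<close>] rejects_before_def by simp
qed

lemma stop_time_positional_gt:
  assumes "p \<in> Sym N" and "k < N"
  shows "k < stop_time N (positional k) p"
proof -
  have "rejects_before (positional k) (Suc k) p"
    using length_Sym[OF assms(1)] assms(2) by (auto simp: rejects_before_def positional_def)
  then show ?thesis using le_stop_time_iff[of "Suc k" N] assms(2) by (simp add: Suc_le_eq)
qed

lemma stop_time_positional_eqI:
  assumes p: "p \<in> Sym N" and j: "k < j" "j \<le> N"
    and reached: "j \<le> stop_time N (positional k) p" and "lr_max_at j p"
  shows "stop_time N (positional k) p = j"
proof (cases "j < N")
  case True
  have "lr_max_at j (std (take j p))"
    using lr_max_at_std_take \<open>lr_max_at j p\<close> j length_Sym[OF p] by simp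
  then have "positional k (std (take j p))"
    using last_is_lr_max_iff[of "std (take j p)" j] j length_Sym[OF p]
    by (simp add: positional_def)
  then show ?thesis using stop_time_le[of j N] True j reached by fastforce
next
  case False
  then show ?thesis using reached j stop_time_bounds[of N "positional k" p] by simp
qed

lemma lr_max_at_stop_time_positional:
  assumes p: "p \<in> Sym N" and "stop_time N (positional k) p = j" and "j < N"
  shows "lr_max_at j p"
proof -
  have "1 \<le> j" using stop_time_bounds[of N "positional k" p] assms by simp
  have "positional k (std (take j p))" using accepts_at_stop_time assms by fastforce
  then have "lr_max_at j (std (take j p))"
    using last_is_lr_max_iff[of "std (take j p)" j] \<open>1 \<le> j\<close> \<open>j < N\<close> length_Sym[OF p]
    by (simp add: positional_def)
  then show ?thesis using lr_max_at_std_take \<open>j < N\<close> length_Sym[OF p] by simp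
qed

section \<open>An optimal stopping recursion\<close>

text \<open>
  At step \<open>i\<close> the candidate is a left-to-right maximum with probability \<open>r i\<close>, and accepting
  it then wins with probability \<open>S i\<close>.  \<open>optimal_value\<close> is the Bellman value from step \<open>i\<close>
  on; \<open>threshold_value\<close> is the value of accepting the first left-to-right maximum from
  step \<open>i\<close> on.
\<close>

function optimal_value :: "nat \<Rightarrow> (nat \<Rightarrow> real) \<Rightarrow> (nat \<Rightarrow> real) \<Rightarrow> nat \<Rightarrow> real" where
  "optimal_value N r S i =
     (if N \<le> i then r N * S N
      else max (optimal_value N r S (Suc i)) (r i * S i + (1 - r i) * optimal_value N r S (Suc i)))"
  by auto
termination by (relation "measure (\<lambda>(N, r, S, i). N - i)") auto

function threshold_value :: "nat \<Rightarrow> (nat \<Rightarrow> real) \<Rightarrow> (nat \<Rightarrow> real) \<Rightarrow> nat \<Rightarrow> real" where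
  "threshold_value N r S i =
     (if N \<le> i then r N * S N else r i * S i + (1 - r i) * threshold_value N r S (Suc i))"
  by auto
termination by (relation "measure (\<lambda>(N, r, S, i). N - i)") auto

declare optimal_value.simps [simp del] threshold_value.simps [simp del]

lemma optimal_value_ge: "N \<le> i \<Longrightarrow> optimal_value N r S i = r N * S N"
  by (subst optimal_value.simps) simp

lemma optimal_value_less:
  "i < N \<Longrightarrow> optimal_value N r S i =
     max (optimal_value N r S (Suc i)) (r i * S i + (1 - r i) * optimal_value N r S (Suc i))"
  by (subst optimal_value.simps) simp

lemma threshold_value_ge: "N \<le> i \<Longrightarrow> threshold_value N r S i = r N * S N"
  by (subst threshold_value.simps) simp

lemma threshold_value_less:
  "i < N \<Longrightarrow> threshold_value N r S i = r i * S i + (1 - r i) * threshold_value N r S (Suc i)"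
  by (subst threshold_value.simps) simp

lemma optimal_value_nonneg:
  assumes "\<And>j. 0 \<le> r j" and "\<And>j. 0 \<le> S j"
  shows "0 \<le> optimal_value N r S i"
proof (induction "N - i" arbitrary: i rule: less_induct)
  case less
  show ?case
  proof (cases "N \<le> i")
    case True
    then show ?thesis using assms by (simp add: optimal_value_ge)
  next
    case False
    then have "0 \<le> optimal_value N r S (Suc i)" using less by simp
    then show ?thesis using False by (simp add: optimal_value_less le_max_iff_disj)
  qed
qed

text \<open>
  If \<open>a j\<close> is the probability of stopping at a left-to-right maximum at step \<open>j\<close> and \<open>u j\<close>
  the probability of reaching step \<open>j\<close>, the winning probability \<open>\<Sum>j. S j * a j\<close> of any
  strategy is bounded by the optimal value.
\<close>

lemma sum_le_optimal_value:
  assumes r: "\<And>j. 0 \<le> r j" and S: "\<And>j. 0 \<le> S j"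
    and a: "\<And>j. j \<in> {1..N} \<Longrightarrow> 0 \<le> a j" "\<And>j. j \<in> {1..N} \<Longrightarrow> a j \<le> r j * u j"
    and u: "\<And>j. j \<in> {1..N} \<Longrightarrow> 0 \<le> u j" "\<And>j. j \<in> {1..<N} \<Longrightarrow> u (Suc j) \<le> u j - a j"
    and i: "1 \<le> i" "i \<le> N"
  shows "(\<Sum>j=i..N. S j * a j) \<le> u i * optimal_value N r S i"
  using i
proof (induction "N - i" arbitrary: i rule: less_induct)
  case (less i)
  show ?case
  proof (cases "N \<le> i")
    case True
    then have "i = N" using less by simp
    then show ?thesis
      using a(2)[of N] S[of N] less by (auto simp: optimal_value_ge algebra_simps intro!: mult_left_mono)
  next
    case False
    let ?v = "optimal_value N r S (Suc i)"
    have IH: "(\<Sum>j=Suc i..N. S j * a j) \<le> u (Suc i) * ?v"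
      using less.hyps[of "Suc i"] less.prems False by auto
    have v: "0 \<le> ?v" using optimal_value_nonneg r S .
    have ui: "0 \<le> u i" and ai: "0 \<le> a i" "a i \<le> r i * u i"
      using u(1) a less by auto
    have "(\<Sum>j=i..N. S j * a j) = S i * a i + (\<Sum>j=Suc i..N. S j * a j)"
      using less by (simp add: sum.atLeast_Suc_atMost)
    also have "\<dots> \<le> S i * a i + u (Suc i) * ?v" using IH by simp
    also have "\<dots> \<le> S i * a i + (u i - a i) * ?v"
      using u(2)[of i] less False v by (simp add: mult_right_mono)
    also have "\<dots> = a i * (S i - ?v) + u i * ?v" by (simp add: algebra_simps)
    also have "\<dots> \<le> u i * max ?v (r i * S i + (1 - r i) * ?v)"
    proof (cases "?v \<le> S i")
      case True
      have "a i * (S i - ?v) + u i * ?v \<le> (r i * u i) * (S i - ?v) + u i * ?v"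
        using ai True by (simp add: mult_right_mono)
      also have "\<dots> = u i * (r i * S i + (1 - r i) * ?v)" by (simp add: algebra_simps)
      also have "\<dots> \<le> u i * max ?v (r i * S i + (1 - r i) * ?v)"
        using ui by (intro mult_left_mono) simp_all
      finally show ?thesis .
    next
      case False
      then have "a i * (S i - ?v) \<le> 0" using ai by (intro mult_nonneg_nonpos) auto
      moreover have "u i * ?v \<le> u i * max ?v (r i * S i + (1 - r i) * ?v)"
        using ui by (intro mult_left_mono) simp_all
      ultimately show ?thesis by linarith
    qed
    finally show ?thesis using False by (simp add: optimal_value_less)
  qed
qed

lemma sum_eq_threshold_value:
  assumes a: "\<And>j. j \<in> {i..N} \<Longrightarrow> a j = r j * u j"
    and u: "\<And>j. j \<in> {i..<N} \<Longrightarrow> u (Suc j) = u j - a j"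
    and "i \<le> N"
  shows "(\<Sum>j=i..N. S j * a j) = u i * threshold_value N r S i"
  using assms
proof (induction "N - i" arbitrary: i rule: less_induct)
  case (less i)
  show ?case
  proof (cases "N \<le> i")
    case True
    then show ?thesis using less.prems(1)[of N] less.prems(3)
      by (simp add: threshold_value_ge algebra_simps)
  next
    case False
    have IH: "(\<Sum>j=Suc i..N. S j * a j) = u (Suc i) * threshold_value N r S (Suc i)"
      using less.hyps[of "Suc i"] less.prems False by auto
    have "(\<Sum>j=i..N. S j * a j) = S i * a i + (\<Sum>j=Suc i..N. S j * a j)"
      using less by (simp add: sum.atLeast_Suc_atMost)
    then show ?thesis
      using IH less.prems(1)[of i] less.prems(2)[of i] False
      by (simp add: threshold_value_less algebra_simps)
  qed
qed

text \<open>Because \<open>S\<close> is increasing, once it pays to stop at some step it pays to stop at every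
  later step, so the Bellman value is attained by a threshold rule.\<close>

lemma optimal_value_eq_threshold_value:
  assumes r: "\<And>j. 0 \<le> r j" and S: "\<And>j. S j \<le> S (Suc j)"
    and "i < N" and "optimal_value N r S (Suc i) \<le> S i"
  shows "optimal_value N r S (Suc i) = threshold_value N r S (Suc i)"
  using assms(3,4)
proof (induction "N - i" arbitrary: i rule: less_induct)
  case (less i)
  show ?case
  proof (cases "Suc i = N")
    case True
    then show ?thesis by (simp add: optimal_value_ge threshold_value_ge)
  next
    case False
    then have lt: "Suc i < N" using less by simp
    let ?v = "optimal_value N r S (Suc (Suc i))"
    have v: "optimal_value N r S (Suc i) = max ?v (r (Suc i) * S (Suc i) + (1 - r (Suc i)) * ?v)"
      using lt by (rule optimal_value_less)
    have "?v \<le> optimal_value N r S (Suc i)" unfolding v by simp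
    then have "?v \<le> S (Suc i)" using less.prems(2) S[of i] by linarith
    then have "?v = threshold_value N r S (Suc (Suc i))" and "r (Suc i) * ?v \<le> r (Suc i) * S (Suc i)"
      using less.hyps[of "Suc i"] lt r by (auto intro: mult_left_mono)
    then show ?thesis
      using v lt by (simp add: threshold_value_less algebra_simps max_def)
  qed
qed

lemma optimal_value_attained:
  assumes r: "\<And>j. 0 \<le> r j" and S: "\<And>j. S j \<le> S (Suc j)" and "i \<le> N"
  shows "\<exists>j\<in>{i..N}. optimal_value N r S i = threshold_value N r S j"
  using assms(3)
proof (induction "N - i" arbitrary: i rule: less_induct)
  case (less i)
  show ?case
  proof (cases "N \<le> i")
    case True
    then show ?thesis using less by (auto simp: optimal_value_ge threshold_value_ge)
  next
    case False
    let ?v = "optimal_value N r S (Suc i)"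
    have v: "optimal_value N r S i = max ?v (r i * S i + (1 - r i) * ?v)"
      using False by (simp add: optimal_value_less)
    show ?thesis
    proof (cases "?v \<le> S i")
      case True
      have "?v = threshold_value N r S (Suc i)"
        using optimal_value_eq_threshold_value[of r S, OF r S] False True by simp
      moreover have "r i * ?v \<le> r i * S i" using True r by (rule mult_left_mono)
      ultimately have "optimal_value N r S i = threshold_value N r S i"
        using v False by (simp add: threshold_value_less algebra_simps max_def)
      then show ?thesis using less by auto
    next
      case False
      then have "r i * S i \<le> r i * ?v" using r by (intro mult_left_mono) auto
      then have "optimal_value N r S i = ?v" using v by (simp add: algebra_simps max_def)
      moreover obtain j where "j \<in> {Suc i..N}" "?v = threshold_value N r S j"
        using less.hyps[of "Suc i"] \<open>\<not> N \<le> i\<close> by (auto simp: diff_less_mono2)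
      ultimately show ?thesis by force
    qed
  qed
qed

section \<open>Independence under the weighted measure\<close>

locale weighted_game =
  fixes c :: "nat list \<Rightarrow> nat" and \<theta> :: real and N :: nat
  assumes prefix_equivariant: "prefix_equivariant N c"
    and N_pos: "1 \<le> N" and \<theta>_pos: "0 < \<theta>"
begin

definition mass :: "(nat list \<Rightarrow> bool) \<Rightarrow> real" where
  "mass P = (\<Sum>p\<in>{p \<in> Sym N. P p}. \<theta> ^ c p)"

definition prob :: "(nat list \<Rightarrow> bool) \<Rightarrow> real" where
  "prob P = mass P / mass (\<lambda>_. True)"

lemma mass_if: "mass P = (\<Sum>p\<in>Sym N. if P p then \<theta> ^ c p else 0)"
  unfolding mass_def by (simp add: sum.inter_filter)

lemma mass_pos: "0 < mass (\<lambda>_. True)"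
  unfolding mass_def using idperm_in_Sym[of N] \<theta>_pos by (intro sum_pos) auto

lemma win_prob_eq_prob: "win_prob c \<theta> N s = prob (wins N s)"
  unfolding win_prob_def prob_def mass_def by simp

lemma mass_nonneg: "0 \<le> mass P"
  unfolding mass_def using \<theta>_pos by (intro sum_nonneg) auto

lemma mass_mono: "(\<And>p. p \<in> Sym N \<Longrightarrow> P p \<Longrightarrow> Q p) \<Longrightarrow> mass P \<le> mass Q"
  unfolding mass_if using \<theta>_pos by (intro sum_mono) auto

lemma prob_cong:
  assumes "\<And>p. p \<in> Sym N \<Longrightarrow> P p \<longleftrightarrow> Q p"
  shows "prob P = prob Q"
proof -
  have "{p \<in> Sym N. P p} = {p \<in> Sym N. Q p}" using assms by auto
  then show ?thesis by (simp add: prob_def mass_def)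
qed

lemma prob_mono: "(\<And>p. p \<in> Sym N \<Longrightarrow> P p \<Longrightarrow> Q p) \<Longrightarrow> prob P \<le> prob Q"
  unfolding prob_def using mass_mono mass_pos by (simp add: divide_right_mono)

lemma prob_True: "prob (\<lambda>_. True) = 1"
  using mass_pos by (simp add: prob_def)

lemma prob_nonneg: "0 \<le> prob P"
  using mass_nonneg mass_pos by (simp add: prob_def)

lemma prob_split: "prob P = prob (\<lambda>p. P p \<and> Q p) + prob (\<lambda>p. P p \<and> \<not> Q p)"
  unfolding prob_def mass_if add_divide_distrib[symmetric] sum.distrib[symmetric]
  by (intro arg_cong2[where f = "(/)"] sum.cong) auto

lemma prob_eq_sum_fibres:
  assumes "finite I" and "\<And>p. p \<in> Sym N \<Longrightarrow> f p \<in> I"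
  shows "prob P = (\<Sum>i\<in>I. prob (\<lambda>p. f p = i \<and> P p))"
proof -
  have "(\<Sum>i\<in>I. if f p = i \<and> P p then \<theta> ^ c p else 0) = (if P p then \<theta> ^ c p else 0)"
    if "p \<in> Sym N" for p
    using assms that by (simp add: sum.delta)
  then have "mass P = (\<Sum>i\<in>I. mass (\<lambda>p. f p = i \<and> P p))"
    unfolding mass_if by (subst sum.swap) simp
  then show ?thesis by (simp add: prob_def sum_divide_distrib)
qed

lemma weight_act:
  assumes "1 \<le> k" "k \<le> N" and "q \<in> Sym k" and "p \<in> Sym_sorted_prefix N k"
  shows "\<theta> ^ c (act q p) * \<theta> ^ c (idperm k) = \<theta> ^ c p * \<theta> ^ c q"
proof -
  have "p \<in> Sym N" "sorted_wrt (<) (take k p)" using assms(4) by (auto simp: Sym_sorted_prefix_def)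
  then have "int (c p) - int (c (act q p)) = int (c (idperm k)) - int (c q)"
    using prefix_equivariant assms(1-3) unfolding prefix_equivariant_def by blast
  then have "c (act q p) + c (idperm k) = c p + c q" by linarith
  then show ?thesis by (metis power_add)
qed

lemma mass_prefix_factorization:
  assumes "1 \<le> k" "k \<le> N"
  shows "\<theta> ^ c (idperm k) * mass (\<lambda>x. F (std (take k x)) \<and> H (set (take k x)) (drop k x))
    = (\<Sum>p\<in>Sym_sorted_prefix N k. if H (set (take k p)) (drop k p) then \<theta> ^ c p else 0)
      * (\<Sum>q\<in>Sym k. if F q then \<theta> ^ c q else 0)"
proof -
  let ?g = "\<lambda>x. if F (std (take k x)) \<and> H (set (take k x)) (drop k x) then \<theta> ^ c x else 0"
  let ?act = "\<lambda>(p, q). act q p"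
  have pointwise: "\<theta> ^ c (idperm k) * ?g (act q p)
      = (if H (set (take k p)) (drop k p) then \<theta> ^ c p else 0) * (if F q then \<theta> ^ c q else 0)"
    if p: "p \<in> Sym_sorted_prefix N k" and q: "q \<in> Sym k" for p q
  proof -
    have "p \<in> Sym N" and "sorted_wrt (<) (take k p)" using p by (auto simp: Sym_sorted_prefix_def)
    then have "std (take k (act q p)) = q" and "set (take k (act q p)) = set (take k p)"
      and "drop k (act q p) = drop k p"
      using std_take_act[OF q] set_take_act[OF q] drop_act[of q p] length_Sym[OF q] assms
      by simp_all
    then show ?thesis using weight_act[OF assms q p] by (auto simp: algebra_simps)
  qed
  have reindex: "mass (\<lambda>x. F (std (take k x)) \<and> H (set (take k x)) (drop k x))
      = (\<Sum>pq\<in>Sym_sorted_prefix N k \<times> Sym k. ?g (?act pq))"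
    unfolding mass_if by (rule sum.reindex_bij_betw[OF bij_betw_act[OF assms(2)], symmetric])
  have "\<theta> ^ c (idperm k) * mass (\<lambda>x. F (std (take k x)) \<and> H (set (take k x)) (drop k x))
      = (\<Sum>(p, q)\<in>Sym_sorted_prefix N k \<times> Sym k.
          (if H (set (take k p)) (drop k p) then \<theta> ^ c p else 0) * (if F q then \<theta> ^ c q else 0))"
    unfolding reindex sum_distrib_left by (auto intro!: sum.cong simp: pointwise)
  also have "\<dots> = (\<Sum>p\<in>Sym_sorted_prefix N k. if H (set (take k p)) (drop k p) then \<theta> ^ c p else 0)
      * (\<Sum>q\<in>Sym k. if F q then \<theta> ^ c q else 0)"
    by (simp add: sum.cartesian_product[symmetric] sum_product)
  finally show ?thesis .
qed

lemma prob_prefix_indep: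
  assumes "1 \<le> k" "k \<le> N"
  shows "prob (\<lambda>x. F (std (take k x)) \<and> H (set (take k x)) (drop k x))
    = prob (\<lambda>x. F (std (take k x))) * prob (\<lambda>x. H (set (take k x)) (drop k x))"
proof -
  define E where "E = \<theta> ^ c (idperm k)"
  define B where "B H = (\<Sum>p\<in>Sym_sorted_prefix N k. if H (set (take k p)) (drop k p) then \<theta> ^ c p else 0)"
    for H :: "nat set \<Rightarrow> nat list \<Rightarrow> bool"
  define A where "A F = (\<Sum>q\<in>Sym k. if F q then \<theta> ^ c q else 0)" for F :: "nat list \<Rightarrow> bool"
  have E: "0 < E" using \<theta>_pos by (simp add: E_def)
  have factor: "mass (\<lambda>x. F' (std (take k x)) \<and> H' (set (take k x)) (drop k x)) = B H' * A F' / E"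
    for F' H' using mass_prefix_factorization[OF assms, of F' H'] E \<theta>_pos
    unfolding E_def A_def B_def by (simp add: eq_divide_eq mult_ac)
  have "mass (\<lambda>_. True) = B (\<lambda>_ _. True) * A (\<lambda>_. True) / E"
    using factor[of "\<lambda>_. True" "\<lambda>_ _. True"] by simp
  then have "B (\<lambda>_ _. True) * A (\<lambda>_. True) \<noteq> 0" using mass_pos by auto
  then show ?thesis
    unfolding prob_def factor using factor[of F "\<lambda>_ _. True"] factor[of "\<lambda>_. True" H]
    by (simp add: \<open>mass (\<lambda>_. True) = _\<close> field_simps)
qed

end

section \<open>Reaching, stopping and winning\<close>

context weighted_game
begin

definition lr_prob :: "nat \<Rightarrow> real" where
  "lr_prob i = prob (lr_max_at i)"

definition max_prob :: "nat \<Rightarrow> real" where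
  "max_prob i = prob (\<lambda>p. N \<in> set (take i p))"

definition reach :: "strategy \<Rightarrow> nat \<Rightarrow> real" where
  "reach s i = prob (\<lambda>p. i \<le> stop_time N s p)"

definition stop_at_lr_max :: "strategy \<Rightarrow> nat \<Rightarrow> real" where
  "stop_at_lr_max s i = prob (\<lambda>p. stop_time N s p = i \<and> lr_max_at i p)"

lemma reach_one: "reach s 1 = 1"
proof -
  have "reach s 1 = prob (\<lambda>_. True)"
    unfolding reach_def using stop_time_bounds[OF N_pos] by (intro prob_cong) auto
  then show ?thesis by (simp add: prob_True)
qed

text \<open>Reaching \<open>i\<close> depends only on the pattern of the first \<open>i - 1\<close> entries, whereas
  \<open>i\<close> being a left-to-right maximum depends only on their set and the remaining entries.\<close>

lemma prob_reach_lr_max: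
  assumes "1 \<le> i" "i \<le> N"
  shows "prob (\<lambda>p. i \<le> stop_time N s p \<and> lr_max_at i p) = reach s i * lr_prob i"
proof (cases "i = 1")
  case True
  have "prob (\<lambda>p. i \<le> stop_time N s p \<and> lr_max_at i p) = prob (\<lambda>p. i \<le> stop_time N s p)"
    using True by (intro prob_cong) (simp add: lr_max_at_def)
  moreover have "lr_max_at i = (\<lambda>_. True)" using True by (simp add: lr_max_at_def fun_eq_iff)
  then have "lr_prob i = 1" by (simp add: lr_prob_def prob_True)
  ultimately show ?thesis by (simp add: reach_def)
next
  case False
  let ?F = "rejects_before s i" and ?H = "\<lambda>A d. \<forall>y\<in>A. y < d ! (0::nat)"
  have reach: "i \<le> stop_time N s p \<longleftrightarrow> ?F (std (take (i - 1) p))" if "p \<in> Sym N" for p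
    using le_stop_time_iff_std_take[OF that] assms by simp
  have lr: "lr_max_at i p \<longleftrightarrow> ?H (set (take (i - 1) p)) (drop (i - 1) p)" if "p \<in> Sym N" for p
    using lr_max_at_iff_prefix[of i p] length_Sym[OF that] assms by simp
  have "1 \<le> i - 1" "i - 1 \<le> N" using assms False by auto
  from prob_prefix_indep[OF this, of ?F ?H] show ?thesis
    unfolding reach_def lr_prob_def using reach lr by (simp cong: prob_cong)
qed

text \<open>Stopping at a left-to-right maximum \<open>i\<close> is decided by the pattern of the first \<open>i\<close>
  entries; given that, the player wins iff \<open>N\<close> is among them.\<close>

lemma prob_stop_at_max:
  assumes "1 \<le> i" "i \<le> N"
  shows "prob (\<lambda>p. stop_time N s p = i \<and> p ! (i - 1) = N) = stop_at_lr_max s i * max_prob i"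
proof -
  let ?F = "\<lambda>\<sigma>. rejects_before s i \<sigma> \<and> (i = N \<or> \<not> rejects_before s (Suc i) \<sigma>) \<and> lr_max_at i \<sigma>"
  have stop: "stop_time N s p = i \<and> lr_max_at i p \<longleftrightarrow> ?F (std (take i p))" if p: "p \<in> Sym N" for p
  proof -
    have "stop_time N s p = i \<longleftrightarrow> i \<le> stop_time N s p \<and> (i = N \<or> \<not> Suc i \<le> stop_time N s p)"
      using stop_time_bounds[OF N_pos, of s p] by auto
    moreover have "Suc i \<le> stop_time N s p \<longleftrightarrow> rejects_before s (Suc i) (std (take i p))" if "i < N"
      using le_stop_time_iff_std_take[OF p] that by simp
    ultimately show ?thesis
      using le_stop_time_iff_std_take[OF p, of i i s] lr_max_at_std_take[of i p] length_Sym[OF p] assms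
      by auto
  qed
  have "prob (\<lambda>p. stop_time N s p = i \<and> p ! (i - 1) = N)
      = prob (\<lambda>p. ?F (std (take i p)) \<and> N \<in> set (take i p))"
    using nth_eq_max_iff[OF _ assms] stop by (intro prob_cong) blast
  also have "\<dots> = prob (\<lambda>p. ?F (std (take i p))) * max_prob i"
    using prob_prefix_indep[OF assms, of ?F "\<lambda>A _. N \<in> A"] by (simp add: max_prob_def)
  also have "prob (\<lambda>p. ?F (std (take i p))) = stop_at_lr_max s i"
    unfolding stop_at_lr_max_def using stop by (intro prob_cong) simp
  finally show ?thesis .
qed

lemma win_prob_eq_sum: "win_prob c \<theta> N s = (\<Sum>i=1..N. max_prob i * stop_at_lr_max s i)"
proof -
  have "win_prob c \<theta> N s = (\<Sum>i=1..N. prob (\<lambda>p. stop_time N s p = i \<and> wins N s p))"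
    unfolding win_prob_eq_prob using stop_time_bounds[OF N_pos] by (intro prob_eq_sum_fibres) auto
  also have "\<dots> = (\<Sum>i=1..N. prob (\<lambda>p. stop_time N s p = i \<and> p ! (i - 1) = N))"
    by (intro sum.cong prob_cong) (auto simp: wins_def)
  also have "\<dots> = (\<Sum>i=1..N. max_prob i * stop_at_lr_max s i)"
    using prob_stop_at_max[of _ s] by (intro sum.cong) (auto simp: mult.commute)
  finally show ?thesis .
qed

lemma stop_at_lr_max_le:
  assumes "i \<in> {1..N}"
  shows "stop_at_lr_max s i \<le> lr_prob i * reach s i"
proof -
  have "stop_at_lr_max s i \<le> prob (\<lambda>p. i \<le> stop_time N s p \<and> lr_max_at i p)"
    unfolding stop_at_lr_max_def by (rule prob_mono) simp
  then show ?thesis using prob_reach_lr_max[of i s] assms by (simp add: mult.commute)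
qed

lemma reach_eq: "reach s i = reach s (Suc i) + prob (\<lambda>p. stop_time N s p = i)"
  unfolding reach_def by (subst prob_split[where Q = "\<lambda>p. Suc i \<le> stop_time N s p"])
    (auto intro!: arg_cong2[where f = "(+)"] prob_cong)

lemma win_prob_le_optimal_value: "win_prob c \<theta> N s \<le> optimal_value N lr_prob max_prob 1"
proof -
  have "(\<Sum>i=1..N. max_prob i * stop_at_lr_max s i) \<le> reach s 1 * optimal_value N lr_prob max_prob 1"
  proof (rule sum_le_optimal_value)
    fix j
    show "0 \<le> lr_prob j" "0 \<le> max_prob j"
      by (simp_all add: lr_prob_def max_prob_def prob_nonneg)
    show "0 \<le> stop_at_lr_max s j" "0 \<le> reach s j"
      by (simp_all add: stop_at_lr_max_def reach_def prob_nonneg)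
    show "j \<in> {1..N} \<Longrightarrow> stop_at_lr_max s j \<le> lr_prob j * reach s j"
      by (rule stop_at_lr_max_le)
    have "stop_at_lr_max s j \<le> prob (\<lambda>p. stop_time N s p = j)"
      unfolding stop_at_lr_max_def by (rule prob_mono) simp
    then show "reach s (Suc j) \<le> reach s j - stop_at_lr_max s j"
      unfolding reach_eq[of s j] by simp
  qed (use N_pos in auto)
  then show ?thesis using reach_one[of s] by (simp add: win_prob_eq_sum)
qed

lemma win_prob_positional:
  assumes "k < N"
  shows "win_prob c \<theta> N (positional k) = threshold_value N lr_prob max_prob (Suc k)"
proof -
  let ?s = "positional k"
  have "stop_at_lr_max ?s j = 0" if "j \<le> k" for j
  proof -
    have "stop_at_lr_max ?s j = prob (\<lambda>_. False)"
      unfolding stop_at_lr_max_def using stop_time_positional_gt[OF _ assms] that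
      by (intro prob_cong) fastforce
    then show ?thesis by (simp add: prob_def mass_def)
  qed
  then have "win_prob c \<theta> N ?s = (\<Sum>j=Suc k..N. max_prob j * stop_at_lr_max ?s j)"
    unfolding win_prob_eq_sum by (intro sum.mono_neutral_right) auto
  also have "\<dots> = reach ?s (Suc k) * threshold_value N lr_prob max_prob (Suc k)"
  proof (rule sum_eq_threshold_value)
    fix j assume j: "j \<in> {Suc k..N}"
    have "stop_at_lr_max ?s j = prob (\<lambda>p. j \<le> stop_time N ?s p \<and> lr_max_at j p)"
      unfolding stop_at_lr_max_def using stop_time_positional_eqI[of _ N k j] j
      by (intro prob_cong) auto
    then show "stop_at_lr_max ?s j = lr_prob j * reach ?s j"
      using prob_reach_lr_max[of j ?s] j by (simp add: mult.commute)
  next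
    fix j assume j: "j \<in> {Suc k..<N}"
    have "stop_at_lr_max ?s j = prob (\<lambda>p. stop_time N ?s p = j)"
      unfolding stop_at_lr_max_def using lr_max_at_stop_time_positional j
      by (intro prob_cong) auto
    then show "reach ?s (Suc j) = reach ?s j - stop_at_lr_max ?s j"
      using reach_eq[of ?s j] by simp
  qed (use assms in simp)
  also have "reach ?s (Suc k) = prob (\<lambda>_. True)"
    unfolding reach_def using stop_time_positional_gt[OF _ assms] by (intro prob_cong) (simp add: Suc_le_eq)
  finally show ?thesis by (simp add: prob_True)
qed

lemma max_prob_mono: "max_prob i \<le> max_prob (Suc i)"
  unfolding max_prob_def by (intro prob_mono) (meson le_SucI order_refl set_take_subset_set_take subsetD)

lemma exists_optimal_positional:
  "\<exists>k<N. \<forall>s. win_prob c \<theta> N s \<le> win_prob c \<theta> N (positional k)"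
proof -
  have "\<And>j. 0 \<le> lr_prob j" by (simp add: lr_prob_def prob_nonneg)
  from optimal_value_attained[of lr_prob max_prob, OF this max_prob_mono] N_pos obtain j
    where "j \<in> {1..N}" and opt: "optimal_value N lr_prob max_prob 1 = threshold_value N lr_prob max_prob j"
    by blast
  then have "j - 1 < N" and "Suc (j - 1) = j" by auto
  then show ?thesis
    using win_prob_le_optimal_value win_prob_positional[of "j - 1"] opt by auto
qed

end

theorem theorem3p8:
  fixes c :: "nat list \<Rightarrow> nat" and N :: nat and \<theta> :: real
  assumes "prefix_equivariant N c" and "1 \<le> N" and "0 < \<theta>"
  shows "\<exists>k<N. \<forall>s :: strategy. win_prob c \<theta> N s \<le> win_prob c \<theta> N (positional k)"
proof -
  interpret weighted_game c \<theta> N using assms by unfold_locales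
  show ?thesis by (rule exists_optimal_positional)
qed

end
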